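(* In the game $\mathrm{CN}(7,4)$, if $\mathbf p\notin S$ and exactly one stack of $\mathbf p$ has height $0$, then there is a legal move from $\mathbf p$ to some $\mathbf p'\in S$. Here, writing a position as $(a,b,c,d,e,f,g)$ with $a$ a minimum entry, $S_1=\{a=b=0,\ c=g>0,\ d+e+f=c\}$, $S_2=\{a=b=c=d=e=f=g\}$, $S_3=\{a=b,\ c=g,\ d=f,\ a+c=d+e,\ 0<a<e\}$, $S_4=\{a=f,\ b+c=d+e=g+a,\ a<\min\{b,e\},\ a<\max\{c,d\}\}$, and $S=S_1\cup S_2\cup S_3\cup S_4$.
   Context: Circular Nim $\mathrm{CN}(7,4)$: $7$ stacks of tokens are arranged in a circle; a position is a vector $(p_1,\dots,p_7)$ of nonnegative integers giving the stack heights in order around the circle, determined only up to rotation and reflection. A legal move consists of choosing $4$ cyclically consecutive stacks and removing at least one token from at least one of these $4$ stacks (any number from each chosen stack; other stacks unchanged). A position belongs to $S_i$ if some rotation and/or reflection $(a,b,c,d,e,f,g)$ of it with $a$ equal to the minimum entry satisfies the conditions defining $S_i$. *)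

theory Defs
  imports Main
begin

text \<open>Positions of CN(7,4) are lists of length 7 of stack heights, read cyclically.\<close>

definition syms :: "nat list \<Rightarrow> nat list set" where
  "syms p = {rotate k p | k. k < 7} \<union> {rotate k (rev p) | k. k < 7}"

fun condS1 :: "nat list \<Rightarrow> bool" where
  "condS1 [a,b,c,d,e,f,g] = (a = 0 \<and> b = 0 \<and> c = g \<and> c > 0 \<and> d + e + f = c)"
| "condS1 _ = False"

fun condS2 :: "nat list \<Rightarrow> bool" where
  "condS2 [a,b,c,d,e,f,g] = (a = b \<and> b = c \<and> c = d \<and> d = e \<and> e = f \<and> f = g)"
| "condS2 _ = False"

fun condS3 :: "nat list \<Rightarrow> bool" where
  "condS3 [a,b,c,d,e,f,g] = (a = b \<and> c = g \<and> d = f \<and> a + c = d + e \<and> 0 < a \<and> a < e)"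
| "condS3 _ = False"

fun condS4 :: "nat list \<Rightarrow> bool" where
  "condS4 [a,b,c,d,e,f,g] = (a = f \<and> b + c = d + e \<and> d + e = g + a
      \<and> a < min b e \<and> a < max c d)"
| "condS4 _ = False"

definition inSi :: "(nat list \<Rightarrow> bool) \<Rightarrow> nat list \<Rightarrow> bool" where
  "inSi C p = (\<exists>q \<in> syms p. q ! 0 = Min (set q) \<and> C q)"

definition inS :: "nat list \<Rightarrow> bool" where
  "inS p = (inSi condS1 p \<or> inSi condS2 p \<or> inSi condS3 p \<or> inSi condS4 p)"

definition window :: "nat \<Rightarrow> nat set" where
  "window i = {(i + t) mod 7 | t. t < 4}"

definition legal_move :: "nat list \<Rightarrow> nat list \<Rightarrow> bool" where
  "legal_move p p' = (length p = 7 \<and> length p' = 7 \<and>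
     (\<exists>i < 7. (\<forall>j < 7. j \<notin> window i \<longrightarrow> p' ! j = p ! j)
             \<and> (\<forall>j < 7. p' ! j \<le> p ! j) \<and> p' \<noteq> p))"

end

theory Submission
  imports Defs
begin

(* Rotate the unique empty stack to the front and, reflecting if necessary, write the position
   as (0, b, c, d, e, f, g) with all other entries positive and g <= b.  Apart from the case
   b = 1, answered by (0, 1, 0, 0, 1, 0, 1), one of three families of replies works:
   emptying c to reach the S4 position (0, B, 0, D, E, F, G) with D + E = F + G = B, where
   B = min b (d + e) (f + g); emptying g to reach the S1 position (0, B, C, D, E, B, 0), where
   B = min b f (c + d + e); or emptying d and e to reach the S1 position (0, X, C, 0, 0, C, Y)
   with X + Y = C = min c f (b + g).  In each case the stacks realising the minimum are kept and
   the other four stacks of the circle form a window that the move lowers. *)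

lemma window_mod: "window (i mod 7) = window i"
  unfolding window_def by (simp add: mod_add_left_eq)

lemma mem_window_iff: "j \<in> window i \<longleftrightarrow> (\<exists>t<4. j = (i + t) mod 7)"
  unfolding window_def by blast

lemma window_eq: "window i = {i mod 7, (i + 1) mod 7, (i + 2) mod 7, (i + 3) mod 7}"
proof -
  have "{t::nat. t < 4} = {0, 1, 2, 3}"
    by auto
  then have "window i = (\<lambda>t. (i + t) mod 7) ` {0, 1, 2, 3}"
    unfolding window_def by blast
  then show ?thesis
    by simp
qed

lemma less_7_iff: "(j::nat) < 7 \<longleftrightarrow> j = 0 \<or> j = 1 \<or> j = 2 \<or> j = 3 \<or> j = 4 \<or> j = 5 \<or> j = 6"
  by arith

lemma all_less_7: "(\<forall>j<7. P j) \<longleftrightarrow> P 0 \<and> P 1 \<and> P 2 \<and> P 3 \<and> P 4 \<and> P 5 \<and> P (6::nat)"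
  unfolding less_7_iff by blast

text \<open>Here \<open>i + 6 * k\<close> stands for \<open>i - k\<close> modulo 7, and below \<open>3 + 6 * i\<close> for \<open>3 - i\<close>.\<close>

lemma window_rotate:
  assumes "(k + j) mod 7 \<in> window i" "j < 7"
  shows "j \<in> window (i + 6 * k)"
proof -
  obtain t where "t < 4" and t: "(k + j) mod 7 = (i + t) mod 7"
    using assms(1) unfolding mem_window_iff by blast
  have "j = (k + j + 6 * k) mod 7"
    using assms(2) by simp
  also have "\<dots> = ((k + j) mod 7 + 6 * k) mod 7"
    by (simp add: mod_add_left_eq)
  also have "\<dots> = (i + t + 6 * k) mod 7"
    unfolding t by (rule mod_add_left_eq)
  finally show ?thesis
    using \<open>t < 4\<close> unfolding mem_window_iff by (metis add.commute add.left_commute)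
qed

lemma window_rev:
  assumes "6 - j \<in> window i" "i < 7" "j < 7"
  shows "j \<in> window (3 + 6 * i)"
  using assms unfolding less_7_iff window_eq by (elim disjE) auto

lemma legal_moveI:
  assumes "length p = 7" "length q = 7" "\<forall>j<7. j \<notin> window i \<longrightarrow> q ! j = p ! j"
    "\<forall>j<7. q ! j \<le> p ! j" "q \<noteq> p"
  shows "legal_move p q"
  unfolding legal_move_def using assms window_mod[of i] by (metis mod_less_divisor zero_less_numeral)

lemma legal_moveE:
  assumes "legal_move p q"
  obtains i where "i < 7" "length p = 7" "length q = 7"
    "\<forall>j<7. j \<notin> window i \<longrightarrow> q ! j = p ! j" "\<forall>j<7. q ! j \<le> p ! j" "q \<noteq> p"
  using assms unfolding legal_move_def by blast

lemma rotate_inverse: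
  assumes "length xs = 7"
  shows "rotate (7 - k mod 7) (rotate k xs) = xs"
proof -
  have "rotate (7 - k mod 7) (rotate k xs) = rotate (7 - k mod 7) (rotate (k mod 7) xs)"
    using assms rotate_conv_mod by metis
  also have "\<dots> = rotate 7 xs"
    by (simp add: rotate_rotate)
  finally show ?thesis
    using assms by simp
qed

lemma legal_move_rotate:
  assumes "legal_move p q"
  shows "legal_move (rotate k p) (rotate k q)"
proof -
  obtain i where len: "length p = 7" "length q = 7"
    and outside: "\<forall>j<7. j \<notin> window i \<longrightarrow> q ! j = p ! j"
    and le: "\<forall>j<7. q ! j \<le> p ! j" and ne: "q \<noteq> p"
    using assms by (rule legal_moveE)
  show ?thesis
  proof (rule legal_moveI[where i = "i + 6 * k"])
    show "\<forall>j<7. j \<notin> window (i + 6 * k) \<longrightarrow> rotate k q ! j = rotate k p ! j"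
    proof (intro allI impI)
      fix j assume "j < 7" "j \<notin> window (i + 6 * k)"
      then have "(k + j) mod 7 \<notin> window i"
        using window_rotate by blast
      then show "rotate k q ! j = rotate k p ! j"
        using outside len \<open>j < 7\<close> by (simp add: nth_rotate)
    qed
    show "\<forall>j<7. rotate k q ! j \<le> rotate k p ! j"
      using le len by (simp add: nth_rotate)
    show "rotate k q \<noteq> rotate k p"
      using ne len rotate_inverse by metis
  qed (use len in simp_all)
qed

lemma legal_move_rev:
  assumes "legal_move p q"
  shows "legal_move (rev p) (rev q)"
proof -
  obtain i where "i < 7" and len: "length p = 7" "length q = 7"
    and outside: "\<forall>j<7. j \<notin> window i \<longrightarrow> q ! j = p ! j"
    and le: "\<forall>j<7. q ! j \<le> p ! j" and ne: "q \<noteq> p"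
    using assms by (rule legal_moveE)
  show ?thesis
  proof (rule legal_moveI[where i = "3 + 6 * i"])
    show "\<forall>j<7. j \<notin> window (3 + 6 * i) \<longrightarrow> rev q ! j = rev p ! j"
    proof (intro allI impI)
      fix j assume "j < 7" "j \<notin> window (3 + 6 * i)"
      then have "6 - j \<notin> window i"
        using window_rev \<open>i < 7\<close> by blast
      then show "rev q ! j = rev p ! j"
        using outside len \<open>j < 7\<close> by (simp add: rev_nth)
    qed
    show "\<forall>j<7. rev q ! j \<le> rev p ! j"
      using le len by (simp add: rev_nth)
  qed (use len ne in simp_all)
qed

lemma range_rotate_rotate:
  assumes "xs \<noteq> []"
  shows "range (\<lambda>k. rotate k (rotate m xs)) = range (\<lambda>k. rotate k xs)"
proof -
  have "rotate k xs = rotate (k + (length xs - 1) * m) (rotate m xs)" for k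
  proof -
    have "k + (length xs - 1) * m + m = k + m * length xs"
      using assms by (cases "length xs") (auto simp: algebra_simps)
    then have "rotate (k + (length xs - 1) * m) (rotate m xs) = rotate (k + m * length xs) xs"
      by (simp only: rotate_rotate)
    then show ?thesis
      by (metis rotate_conv_mod mod_mult_self1)
  qed
  then show ?thesis
    by (auto simp: rotate_rotate)
qed

lemma rev_rotate: "rev (rotate m xs) = rotate (length xs - m mod length xs) (rev xs)"
proof (cases "xs = [] \<or> m mod length xs = 0")
  case True
  then show ?thesis by auto
next
  case False
  then have "(length xs - m mod length xs) mod length xs = length xs - m mod length xs"
    by simp
  with False show ?thesis
    by (simp add: rotate_rev rotate_conv_mod[of m xs])
qed

lemma rotations_eq_range:
  assumes "xs \<noteq> []"
  shows "{rotate k xs | k. k < length xs} = range (\<lambda>k. rotate k xs)"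
proof (intro subset_antisym subsetI)
  fix ys assume "ys \<in> range (\<lambda>k. rotate k xs)"
  then obtain k where "ys = rotate k xs"
    by blast
  then have "ys = rotate (k mod length xs) xs" "k mod length xs < length xs"
    using assms rotate_conv_mod by auto
  then show "ys \<in> {rotate k xs | k. k < length xs}"
    by blast
qed blast

lemma syms_eq_ranges:
  assumes "length p = 7"
  shows "syms p = range (\<lambda>k. rotate k p) \<union> range (\<lambda>k. rotate k (rev p))"
proof -
  have ne: "p \<noteq> []" "rev p \<noteq> []"
    using assms by auto
  have "syms p = {rotate k p | k. k < length p} \<union> {rotate k (rev p) | k. k < length (rev p)}"
    using assms unfolding syms_def by simp
  also have "\<dots> = range (\<lambda>k. rotate k p) \<union> range (\<lambda>k. rotate k (rev p))"
    by (simp only: rotations_eq_range[OF ne(1)] rotations_eq_range[OF ne(2)])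
  finally show ?thesis .
qed

lemma syms_rotate:
  assumes "length p = 7"
  shows "syms (rotate m p) = syms p"
proof -
  have "p \<noteq> []" "rev p \<noteq> []"
    using assms by auto
  then show ?thesis
    using assms by (simp add: syms_eq_ranges rev_rotate range_rotate_rotate)
qed

lemma syms_rev: "syms (rev p) = syms p"
  unfolding syms_def by auto

lemma inS_cong: "syms p = syms q \<Longrightarrow> inS p = inS q"
  unfolding inS_def inSi_def by simp

lemma inS_rotate: "length p = 7 \<Longrightarrow> inS (rotate m p) = inS p"
  by (rule inS_cong) (rule syms_rotate)

lemma inS_rev: "inS (rev p) = inS p"
  by (rule inS_cong) (rule syms_rev)

definition can_move_into_S :: "nat list \<Rightarrow> bool" where
  "can_move_into_S p \<longleftrightarrow> (\<exists>q. legal_move p q \<and> inS q)"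

lemma can_move_into_SI: "legal_move p q \<Longrightarrow> inS q \<Longrightarrow> can_move_into_S p"
  unfolding can_move_into_S_def by blast

lemma can_move_into_S_rotate:
  assumes "can_move_into_S p"
  shows "can_move_into_S (rotate k p)"
proof -
  obtain q where "legal_move p q" "inS q"
    using assms unfolding can_move_into_S_def by blast
  moreover have "length q = 7"
    using \<open>legal_move p q\<close> by (rule legal_moveE)
  ultimately show ?thesis
    by (intro can_move_into_SI[of _ "rotate k q"] legal_move_rotate) (simp_all add: inS_rotate)
qed

lemma can_move_into_S_rev:
  assumes "can_move_into_S p"
  shows "can_move_into_S (rev p)"
  using assms legal_move_rev inS_rev unfolding can_move_into_S_def by blast

lemma inSi_zero_headI:
  assumes "C q" "q \<noteq> []" "q ! 0 = 0"
  shows "inSi C q"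
proof -
  have "q \<in> syms q"
    unfolding syms_def by (auto intro: exI[of _ 0])
  moreover have "q ! 0 = Min (set q)"
    using assms by (metis Min_le List.finite_set le_zero_eq nth_mem length_greater_0_conv)
  ultimately show ?thesis
    using assms(1) unfolding inSi_def by blast
qed

lemma inS_S4_empty_c:
  assumes "D + E = B" "F + G = B" "0 < D" "0 < G" "0 < E \<or> 0 < F"
  shows "inS [0, B, 0, D, E, F, G]"
proof -
  have "inSi condS4 [0, D, E, F, G, 0, B]"
    by (rule inSi_zero_headI) (use assms in auto)
  then have "inS (rotate 2 [0, B, 0, D, E, F, G])"
    unfolding inS_def by (simp add: numeral_eq_Suc)
  then show ?thesis
    by (simp add: inS_rotate)
qed

lemma inS_S1_empty_g:
  assumes "C + D + E = B" "0 < B"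
  shows "inS [0, B, C, D, E, B, 0]"
proof -
  have "inSi condS1 [0, 0, B, C, D, E, B]"
    by (rule inSi_zero_headI) (use assms in auto)
  then have "inS (rotate 6 [0, B, C, D, E, B, 0])"
    unfolding inS_def by (simp add: numeral_eq_Suc)
  then show ?thesis
    by (simp add: inS_rotate)
qed

lemma inS_S1_empty_de:
  assumes "X + Y = C" "0 < C"
  shows "inS [0, X, C, 0, 0, C, Y]"
proof -
  have "inSi condS1 [0, 0, C, Y, 0, X, C]"
    by (rule inSi_zero_headI) (use assms in auto)
  then have "inS (rotate 3 [0, X, C, 0, 0, C, Y])"
    unfolding inS_def by (simp add: numeral_eq_Suc)
  then show ?thesis
    by (simp add: inS_rotate)
qed

lemma split_bounded_sum:
  fixes s d e :: nat
  assumes "s \<le> d + e"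
  obtains d' e' where "d' \<le> d" "e' \<le> e" "d' + e' = s"
  using assms by (intro that[of "min d s" "s - min d s"]) auto

lemma split_bounded_sum_pos:
  fixes s d e :: nat
  assumes "s \<le> d + e" "0 < d" "0 < e" "2 \<le> s"
  obtains d' e' where "0 < d'" "d' \<le> d" "0 < e'" "e' \<le> e" "d' + e' = s"
  using assms by (intro that[of "min d (s - 1)" "s - min d (s - 1)"]) auto

lemma can_move_into_S_unit_b:
  assumes "0 < c" "0 < e"
  shows "can_move_into_S [0, 1, c, d, e, f, 1]"
proof (rule can_move_into_SI)
  show "legal_move [0, 1, c, d, e, f, 1] [0, 1, 0, 0, 1, 0, 1]"
    by (rule legal_moveI[where i = 2]) (use assms in \<open>simp_all add: all_less_7 window_eq\<close>)
  have "inSi condS1 [0, 0, 1, 0, 1, 0, 1]"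
    by (rule inSi_zero_headI) auto
  then have "inS (rotate 2 [0, 1, 0, 0, 1, 0, 1])"
    unfolding inS_def by (simp add: numeral_eq_Suc)
  then show "inS [0, 1, 0, 0, 1, 0, 1]"
    by (simp add: inS_rotate)
qed

lemma can_move_into_S_emptying_c:
  fixes b c d e f g :: nat
  assumes pos: "0 < c" "0 < d" "0 < e" "0 < f" "0 < g"
    and "g \<le> b" "2 \<le> b" and admissible: "b \<le> d + e \<or> f + g \<le> d + e \<or> f < d + e"
  shows "can_move_into_S [0, b, c, d, e, f, g]"
proof -
  consider (keep_b) "b \<le> d + e" "b \<le> f + g"
    | (keep_fg) "f + g \<le> b" "f + g \<le> d + e"
    | (keep_de) "d + e \<le> b" "d + e \<le> f + g" "f < d + e"
    using admissible by linarith
  then show ?thesis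
  proof cases
    case keep_b
    obtain d' e' where d'e': "0 < d'" "d' \<le> d" "0 < e'" "e' \<le> e" "d' + e' = b"
      using keep_b(1) pos(2,3) \<open>2 \<le> b\<close> by (rule split_bounded_sum_pos)
    show ?thesis
    proof (rule can_move_into_SI)
      show "legal_move [0, b, c, d, e, f, g] [0, b, 0, d', e', b - g, g]"
        by (rule legal_moveI[where i = 2])
          (use pos keep_b d'e' in \<open>simp_all add: all_less_7 window_eq\<close>)
      show "inS [0, b, 0, d', e', b - g, g]"
        by (rule inS_S4_empty_c) (use pos \<open>g \<le> b\<close> d'e' in auto)
    qed
  next
    case keep_fg
    obtain d' e' where d'e': "0 < d'" "d' \<le> d" "0 < e'" "e' \<le> e" "d' + e' = f + g"
      using keep_fg(2) pos(2,3) by (rule split_bounded_sum_pos) (use pos in simp)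
    show ?thesis
    proof (rule can_move_into_SI)
      show "legal_move [0, b, c, d, e, f, g] [0, f + g, 0, d', e', f, g]"
        by (rule legal_moveI[where i = 1])
          (use pos keep_fg d'e' in \<open>simp_all add: all_less_7 window_eq\<close>)
      show "inS [0, f + g, 0, d', e', f, g]"
        by (rule inS_S4_empty_c) (use pos d'e' in auto)
    qed
  next
    case keep_de
    show ?thesis
    proof (rule can_move_into_SI)
      show "legal_move [0, b, c, d, e, f, g] [0, d + e, 0, d, e, f, d + e - f]"
        by (rule legal_moveI[where i = 6])
          (use pos keep_de in \<open>simp_all add: all_less_7 window_eq\<close>)
      show "inS [0, d + e, 0, d, e, f, d + e - f]"
        by (rule inS_S4_empty_c) (use pos keep_de in auto)
    qed
  qed
qed

lemma can_move_into_S_emptying_g: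
  fixes b c d e f g :: nat
  assumes pos: "0 < b" "0 < c" "0 < f" "0 < g"
    and "d + e \<le> f" and admissible: "c \<le> b \<or> f \<le> b \<and> f \<le> c + d + e"
  shows "can_move_into_S [0, b, c, d, e, f, g]"
proof -
  consider (keep_cde) "c + d + e \<le> b" "c + d + e \<le> f"
    | (keep_bc) "c \<le> b" "b \<le> f" "b \<le> c + d + e"
    | (keep_def) "f \<le> b" "f \<le> c + d + e"
    using admissible by linarith
  then show ?thesis
  proof cases
    case keep_cde
    show ?thesis
    proof (rule can_move_into_SI)
      show "legal_move [0, b, c, d, e, f, g] [0, c + d + e, c, d, e, c + d + e, 0]"
        by (rule legal_moveI[where i = 5])
          (use pos keep_cde in \<open>simp_all add: all_less_7 window_eq\<close>)
      show "inS [0, c + d + e, c, d, e, c + d + e, 0]"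
        by (rule inS_S1_empty_g) (use pos keep_cde in auto)
    qed
  next
    case keep_bc
    have "b - c \<le> d + e"
      using keep_bc by simp
    then obtain d' e' where d'e': "d' \<le> d" "e' \<le> e" "d' + e' = b - c"
      by (rule split_bounded_sum)
    show ?thesis
    proof (rule can_move_into_SI)
      show "legal_move [0, b, c, d, e, f, g] [0, b, c, d', e', b, 0]"
        by (rule legal_moveI[where i = 3])
          (use pos keep_bc d'e' in \<open>simp_all add: all_less_7 window_eq\<close>)
      show "inS [0, b, c, d', e', b, 0]"
        by (rule inS_S1_empty_g) (use pos keep_bc d'e' in auto)
    qed
  next
    case keep_def
    show ?thesis
    proof (rule can_move_into_SI)
      show "legal_move [0, b, c, d, e, f, g] [0, f, f - (d + e), d, e, f, 0]"
        by (rule legal_moveI[where i = 6])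
          (use pos keep_def in \<open>simp_all add: all_less_7 window_eq\<close>)
      show "inS [0, f, f - (d + e), d, e, f, 0]"
        by (rule inS_S1_empty_g) (use pos keep_def \<open>d + e \<le> f\<close> in auto)
    qed
  qed
qed

lemma can_move_into_S_emptying_de:
  fixes b c d e f g :: nat
  assumes pos: "0 < b" "0 < d" "0 < f"
    and "b \<le> c" "g \<le> f"
  shows "can_move_into_S [0, b, c, d, e, f, g]"
proof -
  consider (keep_bc) "c \<le> f" "c \<le> b + g"
    | (keep_bg) "b + g \<le> c" "b + g \<le> f"
    | (keep_fg) "f \<le> c" "f \<le> b + g"
    by linarith
  then show ?thesis
  proof cases
    case keep_bc
    show ?thesis
    proof (rule can_move_into_SI)
      show "legal_move [0, b, c, d, e, f, g] [0, b, c, 0, 0, c, c - b]"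
        by (rule legal_moveI[where i = 3])
          (use pos keep_bc in \<open>simp_all add: all_less_7 window_eq\<close>)
      show "inS [0, b, c, 0, 0, c, c - b]"
        by (rule inS_S1_empty_de) (use pos \<open>b \<le> c\<close> in auto)
    qed
  next
    case keep_bg
    show ?thesis
    proof (rule can_move_into_SI)
      show "legal_move [0, b, c, d, e, f, g] [0, b, b + g, 0, 0, b + g, g]"
        by (rule legal_moveI[where i = 2])
          (use pos keep_bg in \<open>simp_all add: all_less_7 window_eq\<close>)
      show "inS [0, b, b + g, 0, 0, b + g, g]"
        by (rule inS_S1_empty_de) (use pos in auto)
    qed
  next
    case keep_fg
    show ?thesis
    proof (rule can_move_into_SI)
      show "legal_move [0, b, c, d, e, f, g] [0, f - g, f, 0, 0, f, g]"
        by (rule legal_moveI[where i = 1])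
          (use pos keep_fg in \<open>simp_all add: all_less_7 window_eq\<close>)
      show "inS [0, f - g, f, 0, 0, f, g]"
        by (rule inS_S1_empty_de) (use pos \<open>g \<le> f\<close> in auto)
    qed
  qed
qed

lemma can_move_into_S_zero_first_ordered:
  fixes b c d e f g :: nat
  assumes pos: "0 < b" "0 < c" "0 < d" "0 < e" "0 < f" "0 < g" and "g \<le> b"
  shows "can_move_into_S [0, b, c, d, e, f, g]"
proof -
  consider (unit_b) "b = 1"
    | (empty_c) "2 \<le> b" "b \<le> d + e \<or> f + g \<le> d + e \<or> f < d + e"
    | (empty_g) "d + e \<le> f" "c \<le> b \<or> f \<le> b \<and> f \<le> c + d + e"
    | (empty_de) "b \<le> c" "g \<le> f"
    using assms by linarith
  then show ?thesis
  proof cases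
    case unit_b
    with pos \<open>g \<le> b\<close> have "g = 1"
      by simp
    with \<open>b = 1\<close> show ?thesis
      using can_move_into_S_unit_b[of c e d f] pos by simp
  next
    case empty_c
    with pos \<open>g \<le> b\<close> show ?thesis
      by (intro can_move_into_S_emptying_c)
  next
    case empty_g
    with pos show ?thesis
      by (intro can_move_into_S_emptying_g)
  next
    case empty_de
    with pos show ?thesis
      by (intro can_move_into_S_emptying_de)
  qed
qed

lemma can_move_into_S_zero_first:
  fixes b c d e f g :: nat
  assumes "0 < b" "0 < c" "0 < d" "0 < e" "0 < f" "0 < g"
  shows "can_move_into_S [0, b, c, d, e, f, g]"
proof (cases "g \<le> b")
  case True
  with assms show ?thesis
    by (rule can_move_into_S_zero_first_ordered)
next
  case False
  with assms have "can_move_into_S [0, g, f, e, d, c, b]"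
    by (intro can_move_into_S_zero_first_ordered) simp_all
  then have "can_move_into_S (rotate 6 (rev [0, g, f, e, d, c, b]))"
    by (intro can_move_into_S_rotate can_move_into_S_rev)
  then show ?thesis
    by (simp add: numeral_eq_Suc)
qed

lemma length_7_cases: "length xs = 7 \<Longrightarrow> \<exists>a b c d e f g. xs = [a, b, c, d, e, f, g]"
  by (auto simp: numeral_eq_Suc length_Suc_conv)

lemma rotate_unique_zero_first:
  fixes p :: "nat list"
  assumes "length p = 7" "card {i. i < 7 \<and> p ! i = 0} = 1"
  obtains k b c d e f g where "rotate k p = [0, b, c, d, e, f, g]"
    "0 < b" "0 < c" "0 < d" "0 < e" "0 < f" "0 < g"
proof -
  obtain k where zeros: "{i. i < 7 \<and> p ! i = 0} = {k}"
    using assms(2) by (rule card_1_singletonE)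
  then have "k < 7"
    by auto
  have zero_at: "p ! i = 0 \<longleftrightarrow> i = k" if "i < 7" for i
    using zeros that by (simp add: set_eq_iff) metis
  obtain a b c d e f g where rot: "rotate k p = [a, b, c, d, e, f, g]"
    using length_7_cases[of "rotate k p"] assms(1) by auto
  have zero_iff: "[a, b, c, d, e, f, g] ! j = 0 \<longleftrightarrow> j = 0" if "j < 7" for j
  proof -
    have "[a, b, c, d, e, f, g] ! j = p ! ((k + j) mod 7)"
      using rot nth_rotate[of j p k] assms(1) that by simp
    moreover have "(k + j) mod 7 = k \<longleftrightarrow> j = 0"
      using \<open>k < 7\<close> \<open>j < 7\<close> by (cases "k + j < 7") (auto simp: mod_if)
    ultimately show ?thesis
      using zero_at[of "(k + j) mod 7"] by simp
  qed
  have entries: "a = 0" "0 < b" "0 < c" "0 < d" "0 < e" "0 < f" "0 < g"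
    using zero_iff[of 0] zero_iff[of 1] zero_iff[of 2] zero_iff[of 3] zero_iff[of 4]
      zero_iff[of 5] zero_iff[of 6]
    by simp_all
  show ?thesis
    using that[of k b c d e f g] rot entries by simp
qed

theorem lemma3:
  fixes p :: "nat list"
  assumes "length p = 7"
    and "\<not> inS p"
    and "card {i. i < 7 \<and> p ! i = 0} = 1"
  shows "\<exists>p'. legal_move p p' \<and> inS p'"
proof -
  obtain k b c d e f g where "rotate k p = [0, b, c, d, e, f, g]"
    and "0 < b" "0 < c" "0 < d" "0 < e" "0 < f" "0 < g"
    using assms(1,3) by (rule rotate_unique_zero_first)
  then have "can_move_into_S (rotate k p)"
    using can_move_into_S_zero_first by simp
  then have "can_move_into_S (rotate (7 - k mod 7) (rotate k p))"
    by (rule can_move_into_S_rotate)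
  then show ?thesis
    unfolding rotate_inverse[OF assms(1)] can_move_into_S_def .
qed

end
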